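(* Let $f,g,a,b\in\mathcal R$ with $[b,a]=2b$, and $x\in\mathbb C$. Consider $$A(\zeta)=\begin{pmatrix}-4&0\\0&4\end{pmatrix}\zeta^2+\begin{pmatrix}0&4f\\4f&0\end{pmatrix}\zeta+\begin{pmatrix}2f^2+x&-2f^2+2g-x-\tfrac43b\\2f^2-2g+x+\tfrac43b&-2f^2-x\end{pmatrix}$$ $$\quad+\Big(\big[g-\tfrac23b,f\big]\begin{pmatrix}1&-1\\-1&1\end{pmatrix}+\big(\tfrac43bf+a-\tfrac12\big)\begin{pmatrix}0&1\\1&0\end{pmatrix}\Big)\zeta^{-1}+\big(\tfrac23bf^2-\tfrac13bg+\tfrac13xb+\tfrac49b^2\big)\begin{pmatrix}1&-1\\1&-1\end{pmatrix}\zeta^{-2}.$$ Then $\partial_\zeta Z=A(\zeta)Z$ admits a unique formal solution at $\zeta=\infty$ of the form $(F,D,T)$ (with $r=3$), and for it $T_{-3}=-4\sigma_3$, $T_{-2}=0$, $T_{-1}=x\sigma_3$ and $T_0=0$; that is, $$Z_{form}(\zeta)=F(\zeta)D(\zeta)\exp\Big(\big(-\tfrac43\zeta^3+x\zeta\big)\sigma_3\Big),\qquad\sigma_3=\begin{pmatrix}1&0\\0&-1\end{pmatrix}.$$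
   Context: Standing setup: $\mathcal R$ is an associative unital division ring which is an algebra over $\mathbb C$ (complex numbers central); $[u,v]=uv-vu$. For $X\in\mathrm{Mat}_n(\mathcal R)$, $X_d$ is its diagonal part; $X$ is off-diagonal if $X_d=0$. Formal series are formal Laurent series in $\zeta^{-1}$ with matrix coefficients. Definition (formal solution of the form $(F,D,T)$). Given $A(\zeta)=\sum_{k\ge -r}A_k\zeta^{-k-1}$ with $A_k\in\mathrm{Mat}_n(\mathcal R)$, a formal solution at $\zeta=\infty$ of $\partial_\zeta\Phi=A\Phi$ of the form $(F,D,T)$ consists of: $F=\mathbb I+\sum_{k\ge1}F_k\zeta^{-k}$ with $F_k\in\mathrm{Mat}_n(\mathcal R)$ off-diagonal; $D=\mathbb I+\sum_{k\ge1}D_k\zeta^{-k}$ with $D_k\in\mathrm{Mat}_n(\mathcal R)$ diagonal; diagonal $T_{-r},\dots,T_{-1}\in\mathrm{Mat}_n(\mathbb C)$ and diagonal $T_0\in\mathrm{Mat}_n(\mathcal R)$; such that with $T'(\zeta)=\sum_{k=-r}^0T_k\zeta^{-k-1}$ one has $\partial_\zeta(FD)+FD\,T'(\zeta)=A\,F\,D$ as formal series. It is written $\Phi_{form}=FD\exp\big(\sum_{k=1}^r\frac1kT_{-k}\zeta^k+\ln(\zeta)T_0\big)$. *)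

theory Defs
  imports "HOL-Analysis.Finite_Cartesian_Product" "HOL-Library.Numeral_Type"
begin

text \<open>The division ring R is a type 'a of class division_ring; the C-algebra structure
  is a unital ring homomorphism emb from the complex numbers into the centre of 'a.\<close>

definition complex_central_algebra :: "(complex \<Rightarrow> 'a::division_ring) \<Rightarrow> bool" where
  "complex_central_algebra emb \<longleftrightarrow>
     emb 1 = 1 \<and> (\<forall>x y. emb (x + y) = emb x + emb y) \<and> (\<forall>x y. emb (x * y) = emb x * emb y)
     \<and> (\<forall>c r. emb c * r = r * emb c)"

type_synonym ('a, 'n) sqmat = "'a ^ 'n ^ 'n"

definition diag_part :: "('a::zero, 'n::finite) sqmat \<Rightarrow> ('a, 'n) sqmat" where
  "diag_part X = (\<chi> i j. if i = j then X $ i $ j else 0)"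

definition is_diag :: "('a::zero, 'n::finite) sqmat \<Rightarrow> bool" where
  "is_diag X \<longleftrightarrow> diag_part X = X"

definition off_diag :: "('a::zero, 'n::finite) sqmat \<Rightarrow> bool" where
  "off_diag X \<longleftrightarrow> diag_part X = 0"

text \<open>Formal Laurent series in \<zeta>^{-1} with matrix coefficients: s k is the coefficient of
  \<zeta>^(-k). All series used have coefficients vanishing for k below some bound, so the
  Cauchy product below is a finite sum.\<close>

definition lmult :: "(int \<Rightarrow> ('a::semiring_1, 'n::finite) sqmat) \<Rightarrow> (int \<Rightarrow> ('a, 'n) sqmat)
    \<Rightarrow> int \<Rightarrow> ('a, 'n) sqmat" where
  "lmult a b n = (\<Sum>i\<in>{i. a i ** b (n - i) \<noteq> 0}. a i ** b (n - i))"

text \<open>Derivative: d/d\<zeta> of \<zeta>^(-k) is -k \<zeta>^(-k-1).\<close>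
definition lderiv :: "(int \<Rightarrow> ('a::ring_1, 'n::finite) sqmat) \<Rightarrow> int \<Rightarrow> ('a, 'n) sqmat" where
  "lderiv a n = (\<chi> i j. of_int (- (n - 1)) * (a (n - 1) $ i $ j))"

text \<open>Acoef is the Laurent series A (Acoef j = coefficient of \<zeta>^(-j), i.e. Acoef (k+1) = A_k),
  with Acoef j = 0 for j < 1 - r.
  T' has coefficient T (j-1) at \<zeta>^(-j).\<close>

definition formal_solution ::
  "(complex \<Rightarrow> 'a::division_ring) \<Rightarrow> nat \<Rightarrow> (int \<Rightarrow> ('a, 'n::finite) sqmat)
    \<Rightarrow> (int \<Rightarrow> ('a, 'n) sqmat) \<Rightarrow> (int \<Rightarrow> ('a, 'n) sqmat) \<Rightarrow> (int \<Rightarrow> ('a, 'n) sqmat) \<Rightarrow> bool" where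
  "formal_solution emb r Acoef F D T \<longleftrightarrow>
     F 0 = mat 1 \<and> (\<forall>k<0. F k = 0) \<and> (\<forall>k\<ge>1. off_diag (F k)) \<and>
     D 0 = mat 1 \<and> (\<forall>k<0. D k = 0) \<and> (\<forall>k\<ge>1. is_diag (D k)) \<and>
     (\<forall>k. k < - int r \<or> k > 0 \<longrightarrow> T k = 0) \<and>
     (\<forall>k. - int r \<le> k \<and> k \<le> 0 \<longrightarrow> is_diag (T k)) \<and>
     (\<forall>k. - int r \<le> k \<and> k \<le> -1 \<longrightarrow> (\<forall>i j. T k $ i $ j \<in> range emb)) \<and>
     (let FD = lmult F D; T' = (\<lambda>j. T (j - 1)) in
       (\<forall>n. lderiv FD n + lmult FD T' n = lmult Acoef FD n))"

definition mat2 :: "'a::zero \<Rightarrow> 'a \<Rightarrow> 'a \<Rightarrow> 'a \<Rightarrow> ('a, 2) sqmat" where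
  "mat2 p q s t = (\<chi> i j. if i = 0 then (if j = 0 then p else q) else (if j = 0 then s else t))"

definition smul :: "'a::times \<Rightarrow> ('a, 'n::finite) sqmat \<Rightarrow> ('a, 'n) sqmat" where
  "smul c X = (\<chi> i j. c * X $ i $ j)"

definition sigma3 :: "('a::ring_1, 2) sqmat" where
  "sigma3 = mat2 1 0 0 (-1)"

end

theory Submission
  imports Defs
begin

text \<open>Put Y = F D. Since T' is diagonal, the equation \<partial>Y + Y T' = A Y splits into one equation
  per column of Y, and comparing coefficients of \<zeta>^(-n) turns it into a three-term recursion for
  the diagonal entry U and the off-diagonal entry W of each column. The row of W determines W_k
  with leading factor 8. Eight times the row of U at order k + 1, minus multiples of the row of W
  at orders k and k - 1 (by 4f and p for the first column), cancels all terms of order above k and leaves the factor 8k in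
  front of U_k; the last cancellation is the identity [p, f] = 2c between entries of A_0 and A_1.
  Hence Y is determined by Y_0 = 1. The same elimination at the lowest orders forces T_(-2) = 0,
  T_(-1) = x sigma3 and T_0 = 0, while T_(-3) = -4 sigma3 is read off at order \<zeta>^2.
  Finally Y determines D_k as the diagonal part of Y_k, and then F_k recursively.\<close>

lemma int_recursion_exists:
  assumes step_local: "\<And>h h' k. 1 \<le> k \<Longrightarrow> (\<And>j. j < k \<Longrightarrow> h j = h' j) \<Longrightarrow> step h k = step h' k"
  shows "\<exists>y. \<forall>k::int. y k = (if k \<le> 0 then init k else step y k)"
proof -
  define R where "R = inv_image less_than nat"
  define G where "G h k = (if k \<le> 0 then init k else step h k)" for h and k :: int
  have "adm_wf R G"
    unfolding adm_wf_def R_def G_def by (auto intro!: step_local)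
  then have "wfrec R G = G (wfrec R G)"
    by (intro wfrec_fixpoint) (simp_all add: R_def)
  then show ?thesis
    unfolding G_def by metis
qed

section \<open>Two-by-two matrices\<close>

lemma num2_cases: "(i::2) = 0 \<or> i = 1"
proof (induct i)
  case (of_int z)
  then have "z = 0 \<or> z = 1" by auto
  then show ?case by auto
qed

lemma UNIV_num2: "(UNIV::2 set) = {0, 1}"
  using num2_cases by auto

lemma matrix_mult_2_nth:
  "((A::('a::semiring_1, 2) sqmat) ** B) $ i $ j = A$i$0 * B$0$j + A$i$1 * B$1$j"
  by (simp add: matrix_matrix_mult_def UNIV_num2)

lemma mat2_eta: "(M::('a::zero, 2) sqmat) = mat2 (M$0$0) (M$0$1) (M$1$0) (M$1$1)"
  unfolding mat2_def vec_eq_iff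
proof (intro allI)
  fix i j :: 2
  show "M $ i $ j = (\<chi> i j. if i = 0 then (if j = 0 then M$0$0 else M$0$1)
      else (if j = 0 then M$1$0 else M$1$1)) $ i $ j"
    using num2_cases[of i] num2_cases[of j] by auto
qed

lemma mat2_nth [simp]:
  "mat2 p q r t $ 0 $ 0 = p" "mat2 p q r t $ 0 $ 1 = q"
  "mat2 p q r t $ 1 $ 0 = r" "mat2 p q r t $ 1 $ 1 = t"
  by (simp_all add: mat2_def)

lemma mat2_eq_iff: "mat2 p q r t = mat2 p' q' r' t' \<longleftrightarrow> p = p' \<and> q = q' \<and> r = r' \<and> t = t'"
  by (metis mat2_nth)

lemma mat2_add: "mat2 p q r t + mat2 p' q' r' t' = mat2 (p + p') (q + q') (r + r') (t + t')"
  by (subst mat2_eta) simp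

lemma mat2_zero: "(0::('a::zero, 2) sqmat) = mat2 0 0 0 0"
  by (subst mat2_eta) simp

lemma mat2_one: "(mat 1::('a::{zero,one}, 2) sqmat) = mat2 1 0 0 1"
  by (subst mat2_eta) (simp add: mat_def)

lemma smul_mat2: "smul c (mat2 p q r t) = mat2 (c * p) (c * q) (c * r) (c * t)"
  by (subst mat2_eta) (simp add: smul_def)

lemma diag_part_nth: "diag_part X $ i $ j = (if i = j then X $ i $ j else 0)"
  by (simp add: diag_part_def)

lemma is_diag_mat2: "is_diag (mat2 p 0 0 t)"
  unfolding is_diag_def vec_eq_iff diag_part_nth
proof (intro allI)
  fix i j :: 2
  show "(if i = j then mat2 p 0 0 t $ i $ j else 0) = mat2 p 0 0 t $ i $ j"
    using num2_cases[of i] num2_cases[of j] by auto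
qed

lemma is_diag_mat2D: "is_diag (M::('a::zero, 2) sqmat) \<Longrightarrow> M = mat2 (M$0$0) 0 0 (M$1$1)"
  unfolding is_diag_def by (subst (asm) mat2_eta) (metis diag_part_nth mat2_nth zero_neq_one)

section \<open>Formal series and the factorisation Y = F D\<close>

lemma lmult_eq_sum:
  assumes "finite S" and "\<And>i. i \<notin> S \<Longrightarrow> a i ** b (n - i) = 0"
  shows "lmult a b n = (\<Sum>i\<in>S. a i ** b (n - i))"
  unfolding lmult_def using assms by (intro sum.mono_neutral_left) auto

lemma lmult_eq_sum_right:
  assumes "finite S" and "\<And>j. j \<notin> S \<Longrightarrow> b j = 0"
  shows "lmult a b n = (\<Sum>j\<in>S. a (n - j) ** b j)"
proof -
  have "lmult a b n = (\<Sum>i\<in>(\<lambda>j. n - j) ` S. a i ** b (n - i))"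
  proof (rule lmult_eq_sum)
    show "a i ** b (n - i) = 0" if "i \<notin> (\<lambda>j. n - j) ` S" for i
    proof -
      have "n - i \<notin> S"
      proof
        assume "n - i \<in> S"
        then have "n - (n - i) \<in> (\<lambda>j. n - j) ` S" by (rule imageI)
        with that show False by simp
      qed
      then show ?thesis using assms(2) by simp
    qed
  qed (use assms in auto)
  also have "\<dots> = (\<Sum>j\<in>S. a (n - j) ** b j)"
    by (subst sum.reindex) (auto simp: inj_on_def)
  finally show ?thesis .
qed

lemma lmult_causal:
  assumes "\<And>i. i < 0 \<Longrightarrow> a i = 0" and "\<And>i. i < 0 \<Longrightarrow> b i = 0"
  shows "lmult a b n = (\<Sum>i\<in>{0..n}. a i ** b (n - i))"
  by (rule lmult_eq_sum) (use assms in auto)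

lemma lmult_shift_support_3:
  fixes Y T :: "int \<Rightarrow> ('a::semiring_1, 'n::finite) sqmat"
  assumes "\<And>k. k < -3 \<or> k > 0 \<Longrightarrow> T k = 0"
  shows "lmult Y (\<lambda>j. T (j - 1)) n
    = Y (n+2) ** T (-3) + Y (n+1) ** T (-2) + Y n ** T (-1) + Y (n-1) ** T 0"
proof -
  have "lmult Y (\<lambda>j. T (j - 1)) n = (\<Sum>j\<in>{-2,-1,0,1}. Y (n - j) ** T (j - 1))"
    by (rule lmult_eq_sum_right) (auto intro: assms)
  then show ?thesis by (simp add: add.assoc)
qed

lemma lderiv_nth: "lderiv Y n $ i $ j = of_int (- (n - 1)) * Y (n - 1) $ i $ j"
  by (simp add: lderiv_def)

lemma diag_part_add: "diag_part (X + Y) = diag_part X + (diag_part Y :: ('a::ring_1, 'n::finite) sqmat)"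
  by (simp add: vec_eq_iff diag_part_nth)

lemma diag_part_diff: "diag_part (X - Y) = diag_part X - (diag_part Y :: ('a::ring_1, 'n::finite) sqmat)"
  by (simp add: vec_eq_iff diag_part_nth)

lemma diag_part_zero [simp]: "diag_part (0::('a::ring_1, 'n::finite) sqmat) = 0"
  by (simp add: vec_eq_iff diag_part_nth)

lemma diag_part_sum:
  "diag_part (\<Sum>i\<in>S. X i) = (\<Sum>i\<in>S. diag_part (X i) :: ('a::ring_1, 'n::finite) sqmat)"
  by (induct S rule: infinite_finite_induct) (simp_all add: diag_part_add)

lemma diag_part_mat1 [simp]: "diag_part (mat 1::('a::ring_1, 'n::finite) sqmat) = mat 1"
  by (simp add: vec_eq_iff diag_part_nth mat_def)

lemma is_diag_mat1: "is_diag (mat 1::('a::ring_1, 'n::finite) sqmat)"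
  by (simp add: is_diag_def)

lemma is_diag_diag_part: "is_diag (diag_part X)"
  by (simp add: is_diag_def diag_part_def vec_eq_iff)

lemma diag_part_mult_diag:
  fixes A B :: "('a::ring_1, 'n::finite) sqmat"
  assumes "is_diag B"
  shows "diag_part (A ** B) = diag_part A ** B"
proof -
  have B0: "k \<noteq> j \<Longrightarrow> B $ k $ j = 0" for k j
    using assms unfolding is_diag_def by (metis diag_part_nth)
  have col: "(\<Sum>k\<in>UNIV. A $ i $ k * B $ k $ j) = A $ i $ j * B $ j $ j" for i j
    by (subst sum.remove[of _ j]) (auto simp: B0 intro!: sum.neutral)
  have row: "(\<Sum>k\<in>UNIV. (if i = k then A $ i $ k else 0) * B $ k $ j) = A $ i $ i * B $ i $ j"
    for i j
    by (simp add: if_distrib[of "\<lambda>x. x * _"] cong: if_cong)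
  show ?thesis
    unfolding vec_eq_iff matrix_matrix_mult_def
    by (auto simp: col row diag_part_nth B0)
qed

definition normalized_factors ::
  "(int \<Rightarrow> ('a::ring_1, 'n::finite) sqmat) \<Rightarrow> (int \<Rightarrow> ('a, 'n) sqmat) \<Rightarrow> bool" where
  "normalized_factors F D \<longleftrightarrow>
     F 0 = mat 1 \<and> (\<forall>k<0. F k = 0) \<and> (\<forall>k\<ge>1. off_diag (F k)) \<and>
     D 0 = mat 1 \<and> (\<forall>k<0. D k = 0) \<and> (\<forall>k\<ge>1. is_diag (D k))"

lemma formal_solution_normalized_factors:
  "formal_solution emb r A F D T \<Longrightarrow> normalized_factors F D"
  unfolding formal_solution_def normalized_factors_def by auto

lemma normalized_factors_lmult:
  assumes "normalized_factors F D"
  shows "lmult F D n = (\<Sum>i\<in>{0..n}. F i ** D (n - i))"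
  by (rule lmult_causal) (use assms in \<open>auto simp: normalized_factors_def\<close>)

lemma normalized_factors_lmult_0:
  assumes "normalized_factors F D"
  shows "lmult F D 0 = mat 1" and "k < 0 \<Longrightarrow> lmult F D k = 0"
  using assms by (simp_all add: normalized_factors_lmult normalized_factors_def)

lemma normalized_factors_diag_part:
  fixes F D :: "int \<Rightarrow> ('a::ring_1, 'n::finite) sqmat"
  assumes nf: "normalized_factors F D"
  shows "D k = diag_part (lmult F D k)"
proof (cases "k < 0")
  case True
  then show ?thesis using nf by (simp add: normalized_factors_lmult normalized_factors_def)
next
  case False
  have Dd: "j \<ge> 0 \<Longrightarrow> is_diag (D j)" for j
    using nf is_diag_mat1 unfolding normalized_factors_def by (cases "j = 0") auto
  have Fd: "i \<ge> 1 \<Longrightarrow> diag_part (F i) = 0" for i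
    using nf unfolding normalized_factors_def off_diag_def by auto
  have "diag_part (lmult F D k) = (\<Sum>i\<in>{0..k}. diag_part (F i) ** D (k - i))"
    using Dd by (simp add: normalized_factors_lmult[OF nf] diag_part_sum diag_part_mult_diag)
  also have "\<dots> = diag_part (F 0) ** D k"
    using False Fd by (subst sum.remove[of _ 0]) (auto intro!: sum.neutral)
  finally show ?thesis using nf by (simp add: normalized_factors_def)
qed

lemma normalized_factors_off_diag_part:
  fixes F D :: "int \<Rightarrow> ('a::ring_1, 'n::finite) sqmat"
  assumes nf: "normalized_factors F D" and k: "k \<ge> 1"
  shows "F k = lmult F D k - (\<Sum>i\<in>{0..<k}. F i ** D (k - i))"
proof -
  have "{0..k} = insert k {0..<k}" using k by auto
  then show ?thesis using nf by (simp add: normalized_factors_lmult normalized_factors_def)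
qed

lemma normalized_factors_unique:
  fixes F D F' D' :: "int \<Rightarrow> ('a::ring_1, 'n::finite) sqmat"
  assumes nf: "normalized_factors F D" and nf': "normalized_factors F' D'"
    and eq: "lmult F D = lmult F' D'"
  shows "F = F' \<and> D = D'"
proof
  show DD: "D = D'"
    using normalized_factors_diag_part[OF nf] normalized_factors_diag_part[OF nf'] eq by auto
  have "F k = F' k" for k
  proof (induct "nat k" arbitrary: k rule: less_induct)
    case less
    show ?case
    proof (cases "k \<ge> 1")
      case True
      have "(\<Sum>i\<in>{0..<k}. F i ** D (k - i)) = (\<Sum>i\<in>{0..<k}. F' i ** D' (k - i))"
        using less DD by (intro sum.cong) auto
      then show ?thesis
        using normalized_factors_off_diag_part[OF nf True]
          normalized_factors_off_diag_part[OF nf' True] eq by simp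
    next
      case False
      then show ?thesis using nf nf' unfolding normalized_factors_def by (cases "k = 0") auto
    qed
  qed
  then show "F = F'" ..
qed

lemma normalized_factors_exist:
  fixes Y :: "int \<Rightarrow> ('a::ring_1, 'n::finite) sqmat"
  assumes Y0: "Y 0 = mat 1" and Yneg: "\<And>k. k < 0 \<Longrightarrow> Y k = 0"
  shows "\<exists>F D. normalized_factors F D \<and> lmult F D = Y"
proof -
  define D where "D k = diag_part (Y k)" for k
  have "\<exists>F. \<forall>k. F k = (if k \<le> 0 then (if k = 0 then mat 1 else 0)
                             else Y k - (\<Sum>i\<in>{0..<k}. F i ** D (k - i)))"
    by (rule int_recursion_exists) (auto intro!: sum.cong)
  then obtain F where F: "\<And>k. F k = (if k \<le> 0 then (if k = 0 then mat 1 else 0)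
                                    else Y k - (\<Sum>i\<in>{0..<k}. F i ** D (k - i)))"
    by blast
  have F0: "F 0 = mat 1" and Fneg: "k < 0 \<Longrightarrow> F k = 0" for k
    using F[of 0] F[of k] by auto
  have Fk: "k \<ge> 1 \<Longrightarrow> F k = Y k - (\<Sum>i\<in>{0..<k}. F i ** D (k - i))" for k
    using F[of k] by simp
  have Fdiag: "diag_part (F k) = 0" if "k \<ge> 1" for k
    using that
  proof (induct "nat k" arbitrary: k rule: less_induct)
    case less
    have "(\<Sum>i\<in>{0..<k}. diag_part (F i) ** D (k - i)) = diag_part (F 0) ** D k"
      using less by (subst sum.remove[of _ 0]) (auto intro!: sum.neutral)
    then show ?case
      using Fk[OF less.prems]
      by (simp add: diag_part_diff diag_part_sum diag_part_mult_diag is_diag_diag_part D_def F0)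
  qed
  have nf: "normalized_factors F D"
    unfolding normalized_factors_def off_diag_def
    using F0 Fneg Fdiag Y0 Yneg by (simp add: D_def is_diag_diag_part)
  have "lmult F D k = Y k" for k
  proof (cases "k \<ge> 1")
    case True
    then show ?thesis using normalized_factors_off_diag_part[OF nf True] Fk[OF True] by simp
  next
    case False
    then show ?thesis using Y0 Yneg normalized_factors_lmult_0[OF nf] by (cases "k = 0") auto
  qed
  with nf show ?thesis by blast
qed

section \<open>The recursion for one column\<close>

lemma mult_numeral_commute: "x * numeral n = numeral n * (x::'a::ring_1)"
  by (metis mult_of_int_commute of_int_numeral)

lemma mult_numeral_commute_simp:
  "NO_MATCH (numeral m) x \<Longrightarrow> x * numeral n = numeral n * (x::'a::ring_1)"
  by (rule mult_numeral_commute)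

lemma mult_numeral_left_commute_simp:
  "NO_MATCH (numeral m) x \<Longrightarrow> x * (numeral n * y) = numeral n * (x * (y::'a::ring_1))"
  by (metis mult.assoc mult_numeral_commute)

lemmas numeral_commute_simps = mult_numeral_commute_simp mult_numeral_left_commute_simp

lemma add_self_simps: "r + r = 2 * (r::'b::ring_1)" "r + (r + q) = 2 * r + (q::'b::ring_1)"
  by (simp_all add: mult_2 add.assoc)

lemma elimination_ring_identity:
  fixes \<phi> a1 a2 a3 a4 a5 a6 b1 b2 b3 b4 b5 d0 d1 d2 :: "'a::ring_1"
  shows "8*(4*\<phi>*Wp2 + 2*\<phi>^2*Up1 + b1*Wp1 + (d0 + b2)*U0 + b3*W0 + b4*Um1 + b5*Wm1)
   - 4*\<phi>*(8*Wp2 + 4*\<phi>*Up1 + a1*U0 + a2*W0 + a3*Um1 + (d1 + a4)*Wm1 + a5*Um2 + a6*Wm2)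
   - b1*(8*Wp1 + 4*\<phi>*U0 + a1*Um1 + a2*Wm1 + a3*Um2 + (d2 + a4)*Wm2 + a5*Um3 + a6*Wm3)
  = 8*(d0*U0) + ((8*b3 - 4*\<phi>*a2)*W0 + (8*b4 - 4*\<phi>*a3 - b1*a1)*Um1
      + (8*b5 - 4*\<phi>*(d1 + a4) - b1*a2)*Wm1 + (-4*\<phi>*a5 - b1*a3)*Um2
      + (-4*\<phi>*a6 - b1*(d2 + a4))*Wm2 - b1*a5*Um3 - b1*a6*Wm3)
   + (8*b2 - 4*\<phi>*a1 - 4*b1*\<phi>)*U0"
  by (simp add: algebra_simps numeral_commute_simps power2_eq_square)

text \<open>Coefficient equations for one column of Y, with diagonal entry U and off-diagonal entry W:
  off_row U W n and diag_row U W n are the coefficients of \<zeta>^(-n) in the two rows of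
  \<partial>Y + Y T' - A Y, once the contributions of T_(-3) and of the part x sigma3 of T_(-1) are
  merged with those of A; \<rho>, \<theta>, \<tau> are the remaining diagonal entries of T_(-2), T_(-1), T_0
  in this column, and \<sigma>, \<sigma>' are the signs of the derivative terms.\<close>

locale column_recurrence =
  fixes \<phi> a1 a2 a3 a4 a5 a6 b1 b2 b3 b4 b5 :: "'a::division_ring" and \<sigma> \<sigma>' :: int
  assumes of_int_neq_0: "\<And>n::int. n \<noteq> 0 \<Longrightarrow> (of_int n::'a) \<noteq> 0"
    and balanced: "8*b2 - 4*\<phi>*a1 - 4*b1*\<phi> = 0"
    and \<sigma>'_neq_0: "\<sigma>' \<noteq> 0"
begin

definition off_row :: "(int \<Rightarrow> 'a) \<Rightarrow> (int \<Rightarrow> 'a) \<Rightarrow> int \<Rightarrow> 'a" where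
  "off_row U W m = 8*W(m+2) + 4*\<phi>*U(m+1) + a1*U m + a2*W m + a3*U(m-1)
     + (of_int(\<sigma>*(m-1)) + a4)*W(m-1) + a5*U(m-2) + a6*W(m-2)"

definition diag_row :: "(int \<Rightarrow> 'a) \<Rightarrow> (int \<Rightarrow> 'a) \<Rightarrow> int \<Rightarrow> 'a" where
  "diag_row U W n = 4*\<phi>*W(n+1) + 2*\<phi>^2*U n + b1*W n + (of_int(\<sigma>'*(n-1)) + b2)*U(n-1)
     + b3*W(n-1) + b4*U(n-2) + b5*W(n-2)"

definition off_tail :: "(int \<Rightarrow> 'a) \<Rightarrow> (int \<Rightarrow> 'a) \<Rightarrow> int \<Rightarrow> 'a" where
  "off_tail U W k = 4*\<phi>*U(k-1) + a1*U(k-2) + a2*W(k-2) + a3*U(k-3)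
     + (of_int(\<sigma>*(k-3)) + a4)*W(k-3) + a5*U(k-4) + a6*W(k-4)"

definition elim_tail :: "(int \<Rightarrow> 'a) \<Rightarrow> (int \<Rightarrow> 'a) \<Rightarrow> int \<Rightarrow> 'a" where
  "elim_tail U W k = (8*b3 - 4*\<phi>*a2)*W k + (8*b4 - 4*\<phi>*a3 - b1*a1)*U(k-1)
     + (8*b5 - 4*\<phi>*(of_int(\<sigma>*(k-1)) + a4) - b1*a2)*W(k-1) + (-4*\<phi>*a5 - b1*a3)*U(k-2)
     + (-4*\<phi>*a6 - b1*(of_int(\<sigma>*(k-2)) + a4))*W(k-2) - b1*a5*U(k-3) - b1*a6*W(k-3)"

definition initial_column :: "(int \<Rightarrow> 'a) \<Rightarrow> (int \<Rightarrow> 'a) \<Rightarrow> bool" where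
  "initial_column U W \<longleftrightarrow> U 0 = 1 \<and> W 0 = 0 \<and> (\<forall>i<0. U i = 0 \<and> W i = 0)"

definition column_equations :: "(int \<Rightarrow> 'a) \<Rightarrow> (int \<Rightarrow> 'a) \<Rightarrow> 'a \<Rightarrow> 'a \<Rightarrow> 'a \<Rightarrow> bool" where
  "column_equations U W \<rho> \<theta> \<tau> \<longleftrightarrow>
     (\<forall>n. off_row U W n = W (n+1) * \<rho> + W n * \<theta> + W (n-1) * \<tau>) \<and>
     (\<forall>n. diag_row U W n = U (n+1) * \<rho> + U n * \<theta> + U (n-1) * \<tau>)"

lemma off_row_eq: "off_row U W m = 8*W(m+2) + off_tail U W (m+2)"
proof -
  have idx: "m + 2 - 1 = m + 1" "m + 2 - 2 = m" "m + 2 - 3 = m - 1" "m + 2 - 4 = m - 2"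
    by simp_all
  show ?thesis unfolding off_row_def off_tail_def idx by (simp add: add.assoc)
qed

text \<open>The combination cancels W (k+2), U (k+1) and W (k+1) identically; the assumption balanced
  removes the remaining U k terms except the one coming from the derivative.\<close>

lemma elimination:
  "8 * diag_row U W (k+1) - 4*\<phi> * off_row U W k - b1 * off_row U W (k-1)
     = of_int (8*\<sigma>'*k) * U k + elim_tail U W k"
proof -
  have idx: "k + 1 + 1 = k + 2" "k + 1 - 1 = k" "k + 1 - 2 = k - 1" "k - 1 + 2 = k + 1"
    "k - 1 + 1 = k" "k - 1 - 1 = k - 2" "k - 1 - 2 = k - 3" by simp_all
  have "8 * diag_row U W (k+1) - 4*\<phi> * off_row U W k - b1 * off_row U W (k-1)
     = 8 * (of_int(\<sigma>'*k) * U k) + elim_tail U W k + (8*b2 - 4*\<phi>*a1 - 4*b1*\<phi>) * U k"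
    unfolding diag_row_def off_row_def elim_tail_def idx by (rule elimination_ring_identity)
  then show ?thesis using balanced by (simp add: mult.assoc)
qed

lemma eight_neq_0: "(8::'a) \<noteq> 0"
  using of_int_neq_0[of 8] by simp

lemma of_int_8\<sigma>'_neq_0: "k \<noteq> 0 \<Longrightarrow> (of_int (8*\<sigma>'*k)::'a) \<noteq> 0"
  by (rule of_int_neq_0) (simp add: \<sigma>'_neq_0)

lemma off_tail_cong:
  "(\<And>j. j < k \<Longrightarrow> U j = U' j \<and> W j = W' j) \<Longrightarrow> off_tail U W k = off_tail U' W' k"
  unfolding off_tail_def by simp

lemma elim_tail_cong:
  "W k = W' k \<Longrightarrow> (\<And>j. j < k \<Longrightarrow> U j = U' j \<and> W j = W' j) \<Longrightarrow> elim_tail U W k = elim_tail U' W' k"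
  unfolding elim_tail_def by simp

lemma column_equations_0_iff:
  "column_equations U W 0 0 0 \<longleftrightarrow>
     (\<forall>k. 8 * W k = - off_tail U W k) \<and> (\<forall>k. of_int (8*\<sigma>'*k) * U k = - elim_tail U W k)"
proof
  assume eqs: "column_equations U W 0 0 0"
  have "8 * W k = - off_tail U W k" for k
    using eqs off_row_eq[of U W "k - 2"] by (simp add: column_equations_def eq_neg_iff_add_eq_0)
  moreover have "of_int (8*\<sigma>'*k) * U k = - elim_tail U W k" for k
    using eqs elimination[of U W k] by (simp add: column_equations_def eq_neg_iff_add_eq_0)
  ultimately show "(\<forall>k. 8 * W k = - off_tail U W k) \<and>
      (\<forall>k. of_int (8*\<sigma>'*k) * U k = - elim_tail U W k)" by blast
next
  assume solved: "(\<forall>k. 8 * W k = - off_tail U W k) \<and>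
      (\<forall>k. of_int (8*\<sigma>'*k) * U k = - elim_tail U W k)"
  then have off: "off_row U W m = 0" for m
    by (simp add: off_row_eq eq_neg_iff_add_eq_0)
  have "8 * diag_row U W n = 0" for n
  proof -
    have "of_int (8*\<sigma>'*(n-1)) * U (n-1) = - elim_tail U W (n-1)"
      using solved by blast
    then show ?thesis using elimination[of U W "n - 1"] by (simp add: off)
  qed
  then have "diag_row U W n = 0" for n
    using eight_neq_0 by simp
  with off show "column_equations U W 0 0 0"
    by (simp add: column_equations_def)
qed

lemma initial_columnD:
  assumes "initial_column U W"
  shows "U 0 = 1" "W 0 = 0" "i < 0 \<Longrightarrow> U i = 0" "i < 0 \<Longrightarrow> W i = 0"
  using assms by (auto simp: initial_column_def)

lemma column_equations_shift_0:
  assumes init: "initial_column U W" and eqs: "column_equations U W \<rho> \<theta> \<tau>"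
  shows "\<rho> = 0 \<and> \<theta> = 0 \<and> \<tau> = 0"
proof -
  note U0 = initial_columnD[OF init]
  note off = eqs[unfolded column_equations_def, THEN conjunct1, rule_format]
  note diag = eqs[unfolded column_equations_def, THEN conjunct2, rule_format]
  have "diag_row U W (-1) = 0" by (simp add: diag_row_def U0)
  then have \<rho>: "\<rho> = 0" using diag[of "-1"] by (simp add: U0)
  have off_neg: "off_row U W (-1) = 0" "off_row U W (-2) = 0"
    using off[of "-1"] off[of "-2"] by (simp_all add: U0)
  have "8 * diag_row U W 0 = 0"
    using elimination[of U W "-1"] off_neg by (simp add: elim_tail_def U0)
  then have \<theta>: "\<theta> = 0" using diag[of 0] eight_neq_0 by (simp add: \<rho> U0)
  have "off_row U W 0 = 0" using off[of 0] by (simp add: \<rho> U0)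
  then have "8 * diag_row U W 1 = 0"
    using elimination[of U W 0] off_neg by (simp add: elim_tail_def U0)
  then have \<tau>: "\<tau> = 0" using diag[of 1] eight_neq_0 by (simp add: \<rho> \<theta> U0)
  show ?thesis using \<rho> \<theta> \<tau> by blast
qed

lemma column_solution_unique:
  assumes init: "initial_column U W" "initial_column U' W'"
    and eqs: "column_equations U W 0 0 0" "column_equations U' W' 0 0 0"
  shows "U = U' \<and> W = W'"
proof -
  have solved: "8 * W k = - off_tail U W k" "of_int (8*\<sigma>'*k) * U k = - elim_tail U W k"
    "8 * W' k = - off_tail U' W' k" "of_int (8*\<sigma>'*k) * U' k = - elim_tail U' W' k" for k
    using eqs unfolding column_equations_0_iff by blast+
  have "U k = U' k \<and> W k = W' k" for k
  proof (induct "nat k" arbitrary: k rule: less_induct)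
    case less
    show ?case
    proof (cases "k \<ge> 1")
      case True
      have before: "U j = U' j \<and> W j = W' j" if "j < k" for j
        by (rule less.hyps) (use that True in auto)
      have "off_tail U W k = off_tail U' W' k"
        by (rule off_tail_cong[OF before])
      then have "8 * W k = 8 * W' k" using solved(1)[of k] solved(3)[of k] by simp
      then have W: "W k = W' k" using eight_neq_0 by simp
      have "elim_tail U W k = elim_tail U' W' k"
        using W before by (rule elim_tail_cong)
      then have "of_int (8*\<sigma>'*k) * U k = of_int (8*\<sigma>'*k) * U' k"
        using solved(2)[of k] solved(4)[of k] by (simp del: of_int_mult)
      then have "U k = U' k" using of_int_8\<sigma>'_neq_0[of k] True by simp
      with W show ?thesis by blast
    next
      case False
      then show ?thesis using initial_columnD[OF init(1)] initial_columnD[OF init(2)]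
        by (cases "k = 0") auto
    qed
  qed
  then show ?thesis by auto
qed

lemma column_equations_of_recursion:
  assumes init: "initial_column U W"
    and W_rec: "\<And>k. k \<ge> 1 \<Longrightarrow> W k = - (inverse 8 * off_tail U W k)"
    and U_rec: "\<And>k. k \<ge> 1 \<Longrightarrow> U k = - (inverse (of_int (8*\<sigma>'*k)) * elim_tail U W k)"
  shows "column_equations U W 0 0 0"
proof -
  note U0 = initial_columnD[OF init]
  have "8 * W k = - off_tail U W k" for k
  proof (cases "k \<ge> 1")
    case True
    then show ?thesis using W_rec[OF True] eight_neq_0 by (simp add: mult.assoc[symmetric])
  next
    case False
    then show ?thesis by (cases "k = 0") (simp_all add: off_tail_def U0)
  qed
  moreover have "of_int (8*\<sigma>'*k) * U k = - elim_tail U W k" for k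
  proof (cases "k \<ge> 1")
    case True
    then show ?thesis using U_rec[OF True] of_int_8\<sigma>'_neq_0[of k]
      by (simp add: mult.assoc[symmetric] del: of_int_mult)
  next
    case False
    then show ?thesis by (cases "k = 0") (simp_all add: elim_tail_def U0)
  qed
  ultimately show ?thesis
    unfolding column_equations_0_iff by blast
qed

lemma column_solution_exists: "\<exists>U W. initial_column U W \<and> column_equations U W 0 0 0"
proof -
  define step where "step h k =
      (let U = fst \<circ> h; W = snd \<circ> h; Wk = - (inverse 8 * off_tail U W k)
       in (- (inverse (of_int (8*\<sigma>'*k)) * elim_tail U (W(k := Wk)) k), Wk))"
    for h :: "int \<Rightarrow> 'a \<times> 'a" and k
  have "\<exists>y. \<forall>k. y k = (if k \<le> 0 then (if k = 0 then (1, 0) else (0, 0)) else step y k)"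
  proof (rule int_recursion_exists)
    fix h h' :: "int \<Rightarrow> 'a \<times> 'a" and k :: int
    assume agree: "\<And>j. j < k \<Longrightarrow> h j = h' j"
    have "off_tail (fst \<circ> h) (snd \<circ> h) k = off_tail (fst \<circ> h') (snd \<circ> h') k"
      by (rule off_tail_cong) (simp add: agree)
    moreover have "elim_tail (fst \<circ> h) ((snd \<circ> h)(k := w)) k
        = elim_tail (fst \<circ> h') ((snd \<circ> h')(k := w)) k" for w
      by (rule elim_tail_cong) (auto simp: agree)
    ultimately show "step h k = step h' k" unfolding step_def Let_def by simp
  qed
  then obtain y where y: "\<And>k. y k = (if k \<le> 0 then (if k = 0 then (1, 0) else (0, 0)) else step y k)"
    by blast
  define U W where "U = fst \<circ> y" and "W = snd \<circ> y"
  have init: "initial_column U W"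
    using y by (simp add: initial_column_def U_def W_def)
  have step_k: "(U k, W k) = step y k" if "k \<ge> 1" for k
    using y[of k] that by (simp add: U_def W_def)
  have W_rec: "W k = - (inverse 8 * off_tail U W k)" if "k \<ge> 1" for k
    using step_k[OF that] by (simp add: step_def Let_def U_def[symmetric] W_def[symmetric])
  have "U k = - (inverse (of_int (8*\<sigma>'*k)) * elim_tail U W k)" if "k \<ge> 1" for k
  proof -
    have "W(k := - (inverse 8 * off_tail U W k)) = W" using W_rec[OF that] by auto
    then show ?thesis
      using step_k[OF that] by (simp add: step_def Let_def U_def[symmetric] W_def[symmetric])
  qed
  with init W_rec show ?thesis
    by (blast intro: column_equations_of_recursion)
qed

end

section \<open>The matrix A\<close>

lemma complex_central_algebraD:
  assumes "complex_central_algebra emb"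
  shows emb_one: "emb 1 = 1" and emb_add: "emb (u + v) = emb u + emb v"
    and emb_mult: "emb (u * v) = emb u * emb v" and emb_central: "emb u * r = r * emb u"
  using assms unfolding complex_central_algebra_def by blast+

context
  fixes emb :: "complex \<Rightarrow> 'a::division_ring"
  assumes alg: "complex_central_algebra emb"
begin

lemma emb_0: "emb 0 = 0"
  using emb_add[OF alg, of 0 0] by simp

lemma emb_uminus: "emb (- u) = - emb u"
  using emb_add[OF alg, of u "- u"] by (simp add: emb_0 eq_neg_iff_add_eq_0 add.commute)

lemma emb_of_nat: "emb (of_nat n) = of_nat n"
  by (induct n) (simp_all add: emb_0 emb_add[OF alg] emb_one[OF alg])

lemma emb_of_int: "emb (of_int n) = of_int n"
  by (cases n rule: int_cases2) (simp_all add: emb_of_nat emb_uminus)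

lemma emb_numeral: "emb (numeral n) = numeral n"
  using emb_of_nat[of "numeral n"] by simp

lemma emb_neq_0: "u \<noteq> 0 \<Longrightarrow> emb u \<noteq> 0"
  using emb_mult[OF alg, of u "inverse u"] by (auto simp: emb_one[OF alg] emb_0)

lemma of_int_neq_0_emb: "n \<noteq> 0 \<Longrightarrow> (of_int n::'a) \<noteq> 0"
  using emb_neq_0[of "of_int n"] by (simp add: emb_of_int)

end

locale lax_matrix =
  fixes emb :: "complex \<Rightarrow> 'a::division_ring" and f g a b :: 'a and x :: complex
  assumes alg: "complex_central_algebra emb"
begin

definition "\<xi> = emb x"
definition "p = - 2 * f^2 + 2 * g - emb x - emb (4/3) * b"
definition "c = (g - emb (2/3) * b) * f - f * (g - emb (2/3) * b)"
definition "e = emb (4/3) * b * f + a - emb (1/2)"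
definition "s = emb (2/3) * b * f^2 - emb (1/3) * b * g + emb (1/3) * emb x * b + emb (4/9) * b^2"

definition A :: "int \<Rightarrow> ('a, 2) sqmat" where
  "A = (\<lambda>j::int.
      if j = -2 then mat2 (-4) 0 0 4
      else if j = -1 then mat2 0 (4 * f) (4 * f) 0
      else if j = 0 then
        mat2 (2 * f^2 + emb x) (- 2 * f^2 + 2 * g - emb x - emb (4/3) * b)
             (2 * f^2 - 2 * g + emb x + emb (4/3) * b) (- 2 * f^2 - emb x)
      else if j = 1 then
        smul ((g - emb (2/3) * b) * f - f * (g - emb (2/3) * b)) (mat2 1 (-1) (-1) 1)
        + smul (emb (4/3) * b * f + a - emb (1/2)) (mat2 0 1 1 0)
      else if j = 2 then
        smul (emb (2/3) * b * f^2 - emb (1/3) * b * g + emb (1/3) * emb x * b + emb (4/9) * b^2)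
             (mat2 1 (-1) 1 (-1))
      else 0)"

definition T_formal :: "int \<Rightarrow> ('a, 2) sqmat" where
  "T_formal k = (if k = -3 then mat2 (-4) 0 0 4 else if k = -1 then mat2 \<xi> 0 0 (- \<xi>) else 0)"

lemma emb_commute_simp:
  "NO_MATCH (emb w) r \<Longrightarrow> NO_MATCH (numeral m) r \<Longrightarrow> r * emb z = emb z * r"
  by (simp add: emb_central[OF alg])

lemma emb_left_commute_simp:
  "NO_MATCH (emb w) r \<Longrightarrow> NO_MATCH (numeral m) r \<Longrightarrow> r * (emb z * q) = emb z * (r * q)"
  by (metis emb_central[OF alg] mult.assoc)

lemma \<xi>_commute_simp: "NO_MATCH \<xi> r \<Longrightarrow> NO_MATCH (numeral m) r \<Longrightarrow> r * \<xi> = \<xi> * r"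
  by (simp add: \<xi>_def emb_central[OF alg])

lemma A_coeffs:
  "A (-2) = mat2 (-4) 0 0 4" "A (-1) = mat2 0 (4*f) (4*f) 0"
  "A 0 = mat2 (2*f^2 + \<xi>) p (-p) (-(2*f^2) - \<xi>)"
  "A 1 = mat2 c (e - c) (e - c) c" "A 2 = mat2 s (-s) s (-s)"
  "j \<notin> {-2, -1, 0, 1, 2} \<Longrightarrow> A j = 0"
  by (auto simp: A_def \<xi>_def p_def c_def e_def s_def smul_mat2 mat2_add mat2_eq_iff algebra_simps)

lemma lmult_A:
  "lmult A Y n = A (-2) ** Y (n+2) + A (-1) ** Y (n+1) + A 0 ** Y n + A 1 ** Y (n-1) + A 2 ** Y (n-2)"
proof -
  have "lmult A Y n = (\<Sum>i\<in>{-2, -1, 0, 1, 2}. A i ** Y (n - i))"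
    by (rule lmult_eq_sum) (auto simp: A_coeffs(6))
  then show ?thesis by (simp add: add.assoc)
qed

lemma commutator_p_f: "p * f - f * p = 2 * c"
proof -
  have "emb (4/3) = 2 * emb (2/3)"
    using emb_mult[OF alg, of 2 "2/3"] emb_numeral[OF alg, of "num.Bit0 num.One"] by simp
  moreover have "f^2 * f = f * f^2" by (simp add: power_commutes)
  ultimately show ?thesis
    unfolding p_def c_def
    by (simp add: algebra_simps numeral_commute_simps emb_commute_simp emb_left_commute_simp)
qed

text \<open>The first column is (U, W) = (Y_00, Y_10), the second (Y_11, Y_01); for both,
  the balance condition is the identity [p, f] = 2c.\<close>

sublocale first: column_recurrence f "-p" "-(2*f^2 + 2*\<xi>)" "e - c" c s "-s" p c "e - c" s "-s" 1 1
proof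
  show "8 * c - 4 * f * - p - 4 * p * f = 0"
    using commutator_p_f by (simp add: algebra_simps numeral_commute_simps)
qed (simp_all add: of_int_neq_0_emb[OF alg])

sublocale second:
  column_recurrence "-f" "-p" "-(2*f^2 + 2*\<xi>)" "-(e - c)" "-c" s "-s" p "-c" "-(e - c)" s "-s" "-1" "-1"
proof
  have "4 * (p * f - f * p) = 8 * c"
    using commutator_p_f by (simp add: algebra_simps numeral_commute_simps)
  then show "8 * - c - 4 * - f * - p - 4 * p * - f = 0"
    by (simp add: algebra_simps numeral_commute_simps)
qed (simp_all add: of_int_neq_0_emb[OF alg])

text \<open>The entries of T for the second column carry a minus sign so that both columns satisfy
  equations of the same shape; T_formal is the case \<rho>, \<theta>, \<tau> = 0.\<close>

lemma formal_equation_iff_columns: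
  fixes Y T :: "int \<Rightarrow> ('a, 2) sqmat"
  assumes T3: "T (-3) = mat2 (-4) 0 0 4" and T2: "T (-2) = mat2 \<rho>1 0 0 (- \<rho>2)"
    and T1: "T (-1) = mat2 (\<xi> + \<theta>1) 0 0 (- (\<xi> + \<theta>2))" and T0: "T 0 = mat2 \<tau>1 0 0 (- \<tau>2)"
    and Tz: "\<And>k. k < -3 \<or> k > 0 \<Longrightarrow> T k = 0"
  shows "(\<forall>n. lderiv Y n + lmult Y (\<lambda>j. T (j - 1)) n = lmult A Y n) \<longleftrightarrow>
    first.column_equations (\<lambda>k. Y k $0$0) (\<lambda>k. Y k $1$0) \<rho>1 \<theta>1 \<tau>1 \<and>
    second.column_equations (\<lambda>k. Y k $1$1) (\<lambda>k. Y k $0$1) \<rho>2 \<theta>2 \<tau>2"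
proof -
  have "lderiv Y n + lmult Y (\<lambda>j. T (j - 1)) n = lmult A Y n \<longleftrightarrow>
     first.off_row (\<lambda>k. Y k $0$0) (\<lambda>k. Y k $1$0) n
       = Y (n+1) $1$0 * \<rho>1 + Y n $1$0 * \<theta>1 + Y (n-1) $1$0 * \<tau>1 \<and>
     first.diag_row (\<lambda>k. Y k $0$0) (\<lambda>k. Y k $1$0) n
       = Y (n+1) $0$0 * \<rho>1 + Y n $0$0 * \<theta>1 + Y (n-1) $0$0 * \<tau>1 \<and>
     second.off_row (\<lambda>k. Y k $1$1) (\<lambda>k. Y k $0$1) n
       = Y (n+1) $0$1 * \<rho>2 + Y n $0$1 * \<theta>2 + Y (n-1) $0$1 * \<tau>2 \<and>
     second.diag_row (\<lambda>k. Y k $1$1) (\<lambda>k. Y k $0$1) n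
       = Y (n+1) $1$1 * \<rho>2 + Y n $1$1 * \<theta>2 + Y (n-1) $1$1 * \<tau>2"
    (is "?L = ?R \<longleftrightarrow> ?C") for n
  proof -
    have LR: "?L = ?R \<longleftrightarrow> ?R $0$0 - ?L $0$0 = 0 \<and> ?R $1$0 - ?L $1$0 = 0
        \<and> ?L $0$1 - ?R $0$1 = 0 \<and> ?L $1$1 - ?R $1$1 = 0"
      by (subst (1 2) mat2_eta) (auto simp: mat2_eq_iff)
    have LT: "lmult Y (\<lambda>j. T (j - 1)) n
        = Y (n+2) ** T (-3) + Y (n+1) ** T (-2) + Y n ** T (-1) + Y (n-1) ** T 0"
      using Tz by (rule lmult_shift_support_3)
    note defs = LT lmult_A T3 T2 T1 T0 A_coeffs matrix_mult_2_nth
      vector_add_component lderiv_nth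
    note simps = algebra_simps numeral_commute_simps \<xi>_commute_simp add_self_simps
    have "?R $0$0 - ?L $0$0 = first.diag_row (\<lambda>k. Y k $0$0) (\<lambda>k. Y k $1$0) n
        - (Y (n+1) $0$0 * \<rho>1 + Y n $0$0 * \<theta>1 + Y (n-1) $0$0 * \<tau>1)"
      "?R $1$0 - ?L $1$0 = first.off_row (\<lambda>k. Y k $0$0) (\<lambda>k. Y k $1$0) n
        - (Y (n+1) $1$0 * \<rho>1 + Y n $1$0 * \<theta>1 + Y (n-1) $1$0 * \<tau>1)"
      "?L $0$1 - ?R $0$1 = second.off_row (\<lambda>k. Y k $1$1) (\<lambda>k. Y k $0$1) n
        - (Y (n+1) $0$1 * \<rho>2 + Y n $0$1 * \<theta>2 + Y (n-1) $0$1 * \<tau>2)"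
      "?L $1$1 - ?R $1$1 = second.diag_row (\<lambda>k. Y k $1$1) (\<lambda>k. Y k $0$1) n
        - (Y (n+1) $1$1 * \<rho>2 + Y n $1$1 * \<theta>2 + Y (n-1) $1$1 * \<tau>2)"
      unfolding defs first.diag_row_def first.off_row_def second.diag_row_def second.off_row_def
      by (simp_all add: simps)
    then show ?thesis
      by (simp only: LR right_minus_eq) blast
  qed
  then show ?thesis
    unfolding first.column_equations_def second.column_equations_def by blast
qed

definition solves_columns :: "(int \<Rightarrow> ('a, 2) sqmat) \<Rightarrow> bool" where
  "solves_columns Y \<longleftrightarrow>
     first.initial_column (\<lambda>k. Y k $0$0) (\<lambda>k. Y k $1$0) \<and>
     first.column_equations (\<lambda>k. Y k $0$0) (\<lambda>k. Y k $1$0) 0 0 0 \<and>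
     second.initial_column (\<lambda>k. Y k $1$1) (\<lambda>k. Y k $0$1) \<and>
     second.column_equations (\<lambda>k. Y k $1$1) (\<lambda>k. Y k $0$1) 0 0 0"

lemma solves_columns_exists: "\<exists>Y. solves_columns Y"
proof -
  obtain u w where "first.initial_column u w" "first.column_equations u w 0 0 0"
    using first.column_solution_exists by blast
  moreover obtain z v where "second.initial_column z v" "second.column_equations z v 0 0 0"
    using second.column_solution_exists by blast
  ultimately have "solves_columns (\<lambda>k. mat2 (u k) (v k) (w k) (z k))"
    by (simp add: solves_columns_def)
  then show ?thesis by blast
qed

lemma solves_columns_unique:
  assumes "solves_columns Y" and "solves_columns Y'"
  shows "Y = Y'"
proof
  fix k
  have "(\<lambda>k. Y k $0$0) = (\<lambda>k. Y' k $0$0) \<and> (\<lambda>k. Y k $1$0) = (\<lambda>k. Y' k $1$0)"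
    using assms unfolding solves_columns_def by (intro first.column_solution_unique) auto
  moreover have "(\<lambda>k. Y k $1$1) = (\<lambda>k. Y' k $1$1) \<and> (\<lambda>k. Y k $0$1) = (\<lambda>k. Y' k $0$1)"
    using assms unfolding solves_columns_def by (intro second.column_solution_unique) auto
  ultimately have "Y k $0$0 = Y' k $0$0" "Y k $0$1 = Y' k $0$1"
    "Y k $1$0 = Y' k $1$0" "Y k $1$1 = Y' k $1$1"
    by (simp_all add: fun_eq_iff)
  then show "Y k = Y' k"
    by (subst (1 2) mat2_eta) simp
qed

lemma solves_columns_initial:
  assumes "solves_columns Y"
  shows "Y 0 = mat 1" and "k < 0 \<Longrightarrow> Y k = 0"
proof -
  have "first.initial_column (\<lambda>k. Y k $0$0) (\<lambda>k. Y k $1$0)"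
    and "second.initial_column (\<lambda>k. Y k $1$1) (\<lambda>k. Y k $0$1)"
    using assms by (simp_all add: solves_columns_def)
  then have "Y 0 $0$0 = 1" "Y 0 $1$0 = 0" "Y 0 $1$1 = 1" "Y 0 $0$1 = 0"
    and "k < 0 \<Longrightarrow> Y k $0$0 = 0 \<and> Y k $1$0 = 0 \<and> Y k $1$1 = 0 \<and> Y k $0$1 = 0"
    by (simp_all add: first.initial_column_def second.initial_column_def)
  then show "Y 0 = mat 1" and "k < 0 \<Longrightarrow> Y k = 0"
    by (subst mat2_eta, simp add: mat2_one mat2_zero)+
qed

lemma formal_solution_leading_T:
  assumes fs: "formal_solution emb 3 A F D T"
  shows "T (-3) = mat2 (-4) 0 0 4"
proof -
  define Y where "Y = lmult F D"
  have nf: "normalized_factors F D"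
    using fs by (rule formal_solution_normalized_factors)
  have Y0: "Y 0 = mat 1" and Yneg: "\<And>k. k < 0 \<Longrightarrow> Y k = 0"
    using normalized_factors_lmult_0[OF nf] by (simp_all add: Y_def)
  have Tz: "\<And>k. k < -3 \<or> k > 0 \<Longrightarrow> T k = 0"
    using fs unfolding formal_solution_def by auto
  have "lderiv Y (-2) + lmult Y (\<lambda>j. T (j - 1)) (-2) = lmult A Y (-2)"
    using fs unfolding formal_solution_def Let_def Y_def by blast
  moreover have "lderiv Y (-2) = 0"
    using Yneg[of "-3"] by (simp add: lderiv_def vec_eq_iff)
  moreover have "lmult Y (\<lambda>j. T (j - 1)) (-2)
      = Y 0 ** T (-3) + Y (-1) ** T (-2) + Y (-2) ** T (-1) + Y (-3) ** T 0"
    using Tz by (subst lmult_shift_support_3) simp_all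
  ultimately show ?thesis
    unfolding lmult_A by (simp add: Y0 Yneg A_coeffs mat2_one[symmetric])
qed

lemma formal_solution_determined:
  assumes fs: "formal_solution emb 3 A F D T"
  shows "T = T_formal \<and> solves_columns (lmult F D)"
proof -
  define Y where "Y = lmult F D"
  have nf: "normalized_factors F D"
    using fs by (rule formal_solution_normalized_factors)
  have Tz: "\<And>k. k < -3 \<or> k > 0 \<Longrightarrow> T k = 0"
    and Tdiag: "\<And>k. -3 \<le> k \<Longrightarrow> k \<le> 0 \<Longrightarrow> T k = mat2 (T k $0$0) 0 0 (T k $1$1)"
    using fs unfolding formal_solution_def by (auto intro: is_diag_mat2D)
  define \<rho>1 \<rho>2 \<theta>1 \<theta>2 \<tau>1 \<tau>2 where
    "\<rho>1 = T (-2) $0$0" "\<rho>2 = - T (-2) $1$1" "\<theta>1 = T (-1) $0$0 - \<xi>" "\<theta>2 = - T (-1) $1$1 - \<xi>"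
    "\<tau>1 = T 0 $0$0" "\<tau>2 = - T 0 $1$1"
  have T: "T (-2) = mat2 \<rho>1 0 0 (- \<rho>2)" "T (-1) = mat2 (\<xi> + \<theta>1) 0 0 (- (\<xi> + \<theta>2))"
    "T 0 = mat2 \<tau>1 0 0 (- \<tau>2)"
    using Tdiag[of "-2"] Tdiag[of "-1"] Tdiag[of 0] by (simp_all add: \<rho>1_\<rho>2_\<theta>1_\<theta>2_\<tau>1_\<tau>2_def)
  have "\<forall>n. lderiv Y n + lmult Y (\<lambda>j. T (j - 1)) n = lmult A Y n"
    using fs unfolding formal_solution_def Let_def Y_def by blast
  then have eqs: "first.column_equations (\<lambda>k. Y k $0$0) (\<lambda>k. Y k $1$0) \<rho>1 \<theta>1 \<tau>1"
    "second.column_equations (\<lambda>k. Y k $1$1) (\<lambda>k. Y k $0$1) \<rho>2 \<theta>2 \<tau>2"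
    using formal_equation_iff_columns[OF formal_solution_leading_T[OF fs] T Tz] by blast+
  have Y0: "Y 0 = mat 1" and Yneg: "\<And>k. k < 0 \<Longrightarrow> Y k = 0"
    using normalized_factors_lmult_0[OF nf] by (simp_all add: Y_def)
  then have init: "first.initial_column (\<lambda>k. Y k $0$0) (\<lambda>k. Y k $1$0)"
    "second.initial_column (\<lambda>k. Y k $1$1) (\<lambda>k. Y k $0$1)"
    by (simp_all add: first.initial_column_def second.initial_column_def mat2_one)
  have zero: "\<rho>1 = 0" "\<theta>1 = 0" "\<tau>1 = 0" "\<rho>2 = 0" "\<theta>2 = 0" "\<tau>2 = 0"
    using first.column_equations_shift_0[OF init(1) eqs(1)]
      second.column_equations_shift_0[OF init(2) eqs(2)] by blast+
  have "T k = T_formal k" for k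
  proof -
    consider "k < -3 \<or> k > 0" | "k = -3" | "k = -2" | "k = -1" | "k = 0" by linarith
    then show ?thesis
      by cases (auto simp: Tz T_formal_def formal_solution_leading_T[OF fs] T zero mat2_zero)
  qed
  moreover have "solves_columns Y"
    using init eqs by (simp add: solves_columns_def zero)
  ultimately show ?thesis by (auto simp: Y_def)
qed

lemma T_formal_entries_in_range: "T_formal k $ i $ j \<in> range emb"
proof -
  have "emb 0 = 0" "emb (- 4) = - 4" "emb 4 = 4" "emb (- x) = - \<xi>"
    by (simp_all add: emb_0[OF alg] emb_uminus[OF alg] emb_numeral[OF alg] \<xi>_def)
  then have "0 \<in> range emb" "- 4 \<in> range emb" "4 \<in> range emb" "\<xi> \<in> range emb" "- \<xi> \<in> range emb"
    unfolding \<xi>_def by (metis rangeI)+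
  then show ?thesis
    using num2_cases[of i] num2_cases[of j] by (auto simp: T_formal_def)
qed

lemma formal_solution_intro:
  assumes nf: "normalized_factors F D" and cols: "solves_columns (lmult F D)"
  shows "formal_solution emb 3 A F D T_formal"
proof -
  have Tz: "\<And>k. k < -3 \<or> k > 0 \<Longrightarrow> T_formal k = 0"
    by (auto simp: T_formal_def)
  have "T_formal (-3) = mat2 (-4) 0 0 4" "T_formal (-2) = mat2 0 0 0 (- 0)"
    "T_formal (-1) = mat2 (\<xi> + 0) 0 0 (- (\<xi> + 0))" "T_formal 0 = mat2 0 0 0 (- 0)"
    by (simp_all add: T_formal_def mat2_zero)
  from formal_equation_iff_columns[OF this Tz] cols
  have "\<forall>n. lderiv (lmult F D) n + lmult (lmult F D) (\<lambda>j. T_formal (j - 1)) n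
      = lmult A (lmult F D) n"
    by (simp add: solves_columns_def)
  moreover have "is_diag (T_formal k)" for k
    using is_diag_mat2[of 0 0] by (simp add: T_formal_def is_diag_mat2 mat2_zero)
  ultimately show ?thesis
    using nf Tz T_formal_entries_in_range
    unfolding formal_solution_def normalized_factors_def Let_def by auto
qed

lemma T_formal_sigma3:
  "T_formal (-3) = smul (-4) sigma3" "T_formal (-2) = 0"
  "T_formal (-1) = smul (emb x) sigma3" "T_formal 0 = 0"
  by (simp_all add: T_formal_def sigma3_def smul_mat2 \<xi>_def)

end

theorem mainTheorem7:
  fixes emb :: "complex \<Rightarrow> 'a::division_ring"
    and f g a b :: 'a and x :: complex
  assumes alg: "complex_central_algebra emb"
    and comm: "b * a - a * b = 2 * b"
  defines "Acoef \<equiv> (\<lambda>j::int.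
      if j = -2 then mat2 (-4) 0 0 4
      else if j = -1 then mat2 0 (4 * f) (4 * f) 0
      else if j = 0 then
        mat2 (2 * f^2 + emb x) (- 2 * f^2 + 2 * g - emb x - emb (4/3) * b)
             (2 * f^2 - 2 * g + emb x + emb (4/3) * b) (- 2 * f^2 - emb x)
      else if j = 1 then
        smul ((g - emb (2/3) * b) * f - f * (g - emb (2/3) * b)) (mat2 1 (-1) (-1) 1)
        + smul (emb (4/3) * b * f + a - emb (1/2)) (mat2 0 1 1 0)
      else if j = 2 then
        smul (emb (2/3) * b * f^2 - emb (1/3) * b * g + emb (1/3) * emb x * b + emb (4/9) * b^2)
             (mat2 1 (-1) 1 (-1))
      else 0)"
  shows "(\<exists>!(F, D, T). formal_solution emb 3 Acoef F D T) \<and>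
         (\<forall>F D T. formal_solution emb 3 Acoef F D T \<longrightarrow>
            T (-3) = smul (-4) sigma3 \<and> T (-2) = 0 \<and> T (-1) = smul (emb x) sigma3 \<and> T 0 = 0)"
proof -
  interpret lax_matrix emb f g a b x
    by unfold_locales (rule alg)
  have Acoef: "Acoef = A"
    unfolding Acoef_def A_def ..
  obtain Y where Y: "solves_columns Y"
    using solves_columns_exists by blast
  then obtain F0 D0 where nf0: "normalized_factors F0 D0" and FD0: "lmult F0 D0 = Y"
    using normalized_factors_exist solves_columns_initial by metis
  have exists: "formal_solution emb 3 A F0 D0 T_formal"
    using formal_solution_intro[OF nf0] Y FD0 by simp
  have unique: "F = F0 \<and> D = D0 \<and> T = T_formal" if "formal_solution emb 3 A F D T" for F D T
    using formal_solution_determined[OF that] solves_columns_unique[OF _ Y] FD0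
      normalized_factors_unique[OF formal_solution_normalized_factors[OF that] nf0] by auto
  have "\<exists>!(F, D, T). formal_solution emb 3 A F D T"
  proof (rule ex1I[of _ "(F0, D0, T_formal)"])
    fix FDT assume "case FDT of (F, D, T) \<Rightarrow> formal_solution emb 3 A F D T"
    then show "FDT = (F0, D0, T_formal)"
      using unique by (cases FDT) simp
  qed (simp add: exists)
  moreover have "T (-3) = smul (-4) sigma3 \<and> T (-2) = 0 \<and> T (-1) = smul (emb x) sigma3 \<and> T 0 = 0"
    if "formal_solution emb 3 A F D T" for F D T
    using unique[OF that] by (simp add: T_formal_sigma3)
  ultimately show ?thesis
    unfolding Acoef by blast
qed

end
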